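(* Let $h:(\mathbb{R}^n,0)\to(\mathbb{R}^n,0)$ be a bi-Lipschitz homeomorphism germ, and let $U,V\subset\mathbb{R}^n$ be set-germs at $0$ with $0\in\overline{U}\cap\overline{V}$. Suppose that $D(U\cap V)=D(U)\cap D(V)$, and that $U\cap V$ and $h(U)$ satisfy condition (SSP). Then $D(h(U\cap V))=D(h(U))\cap D(h(V))$.
   Context: For a set-germ $A\subset\mathbb{R}^n$ at $0$, $D(A)=\{a\in S^{n-1}:\exists\, x_i\in A\setminus\{0\},\ x_i\to0,\ x_i/\|x_i\|\to a\}$ (empty if no such sequences exist). For sequences, $\|u_m\|\ll\|v_m\|,\|w_m\|$ means $\|u_m\|/\|v_m\|\to0$ and $\|u_m\|/\|w_m\|\to0$. A set-germ $A$ satisfies condition (SSP) if for every sequence $a_m\in\mathbb{R}^n$ tending to $0$ with $\lim a_m/\|a_m\|\in D(A)$ there is a sequence $b_m\in A$ with $\|a_m-b_m\|\ll\|a_m\|,\|b_m\|$. A bi-Lipschitz homeomorphism germ is a homeomorphism germ $h$ with $h(0)=0$ and constants $0<K_1\le K_2$ with $K_1\|x-y\|\le\|h(x)-h(y)\|\le K_2\|x-y\|$ near $0$. *)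

theory Defs
  imports "HOL-Analysis.Analysis"
begin

definition tangent_dirs :: "'a::euclidean_space set \<Rightarrow> 'a set" where
  "tangent_dirs A = {a \<in> sphere 0 1. \<exists>x::nat \<Rightarrow> 'a.
      (\<forall>i. x i \<in> A - {0}) \<and> x \<longlonglongrightarrow> 0 \<and> (\<lambda>i. x i /\<^sub>R norm (x i)) \<longlonglongrightarrow> a}"

text \<open>Condition (SSP).  u << v means norm u / norm v tends to 0.\<close>
definition SSP :: "'a::euclidean_space set \<Rightarrow> bool" where
  "SSP A \<longleftrightarrow> (\<forall>a::nat \<Rightarrow> 'a. a \<longlonglongrightarrow> 0 \<and>
      (\<exists>d \<in> tangent_dirs A. (\<lambda>m. a m /\<^sub>R norm (a m)) \<longlonglongrightarrow> d) \<longrightarrow>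
      (\<exists>b::nat \<Rightarrow> 'a. (\<forall>m. b m \<in> A) \<and>
         (\<lambda>m. norm (a m - b m) / norm (a m)) \<longlonglongrightarrow> 0 \<and>
         (\<lambda>m. norm (a m - b m) / norm (b m)) \<longlonglongrightarrow> 0))"

text \<open>h is a bi-Lipschitz homeomorphism germ at 0, represented on the ball of radius r.\<close>
definition bilipschitz_homeo_germ :: "('a::euclidean_space \<Rightarrow> 'a) \<Rightarrow> real \<Rightarrow> bool" where
  "bilipschitz_homeo_germ h r \<longleftrightarrow> r > 0 \<and> h 0 = 0 \<and>
     open (h ` ball 0 r) \<and> (\<exists>g. homeomorphism (ball 0 r) (h ` ball 0 r) h g) \<and>
     (\<exists>K1 K2. 0 < K1 \<and> K1 \<le> K2 \<and> (\<forall>x\<in>ball 0 r. \<forall>y\<in>ball 0 r.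
        K1 * norm (x - y) \<le> norm (h x - h y) \<and> norm (h x - h y) \<le> K2 * norm (x - y)))"

end

theory Submission
  imports Defs
begin

text \<open>
  Take d in D(h(U)) \<inter> D(h(V)), realised by y_i = h(v_i) with v_i in V. Condition (SSP) for h(U)
  gives points h(u_i) with u_i in U and |y_i - h(u_i)| << |y_i|; since h is bi-Lipschitz and
  fixes 0, this relative closeness passes back to |v_i - u_i| << |v_i|. Along a subsequence the
  directions of v_i converge to some e, which is then a direction of both V and U, hence of
  U \<inter> V. Now (SSP) for U \<inter> V gives w_i in U \<inter> V relatively close to v_i, so h(w_i) in h(U \<inter> V)
  is relatively close to y_i and has the same limiting direction d.
\<close>

lemma norm_sgn_diff_le:
  fixes a b :: "'a::real_normed_vector"
  assumes "a \<noteq> 0"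
  shows "norm (sgn a - sgn b) \<le> 2 * norm (a - b) / norm a"
proof (cases "b = 0")
  case True
  then show ?thesis using assms by (simp add: norm_sgn)
next
  case False
  have "norm (sgn a - sgn b) \<le> norm (sgn a - b /\<^sub>R norm a) + norm (b /\<^sub>R norm a - sgn b)"
    using norm_triangle_ineq[of "sgn a - b /\<^sub>R norm a" "b /\<^sub>R norm a - sgn b"] by simp
  also have "norm (sgn a - b /\<^sub>R norm a) = norm (a - b) / norm a"
    by (simp add: sgn_div_norm divide_inverse_commute flip: scaleR_diff_right)
  also have "norm (b /\<^sub>R norm a - sgn b) = \<bar>norm b - norm a\<bar> / norm a"
  proof -
    have "inverse (norm a) - inverse (norm b) = (norm b - norm a) / norm a * inverse (norm b)"
      using assms False by (simp add: field_simps)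
    then have "b /\<^sub>R norm a - sgn b = ((norm b - norm a) / norm a) *\<^sub>R sgn b"
      by (simp add: sgn_div_norm flip: scaleR_diff_left)
    then show ?thesis using False by (simp add: abs_div norm_sgn)
  qed
  also have "\<dots> \<le> norm (a - b) / norm a"
    using norm_triangle_ineq3[of b a] by (simp add: divide_right_mono norm_minus_commute)
  finally show ?thesis by simp
qed

definition rel_close :: "(nat \<Rightarrow> 'a::real_normed_vector) \<Rightarrow> (nat \<Rightarrow> 'a) \<Rightarrow> bool" where
  "rel_close a b \<longleftrightarrow> (\<lambda>i. norm (a i - b i) / norm (a i)) \<longlonglongrightarrow> 0"

lemma rel_close_subseq:
  "rel_close a b \<Longrightarrow> strict_mono s \<Longrightarrow> rel_close (a \<circ> s) (b \<circ> s)"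
  unfolding rel_close_def
  using LIMSEQ_subseq_LIMSEQ[of "\<lambda>i. norm (a i - b i) / norm (a i)" 0 s] by (simp add: comp_def)

lemma rel_close_eventually_nonzero:
  assumes "rel_close a b" and "eventually (\<lambda>i. a i \<noteq> 0) sequentially"
  shows "eventually (\<lambda>i. b i \<noteq> 0) sequentially"
proof -
  have "eventually (\<lambda>i. norm (a i - b i) / norm (a i) < 1) sequentially"
    using order_tendstoD(2)[OF assms(1)[unfolded rel_close_def], of 1] by simp
  with assms(2) show ?thesis by eventually_elim auto
qed

lemma rel_close_tendsto_zero:
  assumes "rel_close a b" and "eventually (\<lambda>i. a i \<noteq> 0) sequentially" and "a \<longlonglongrightarrow> 0"
  shows "b \<longlonglongrightarrow> 0"
proof -
  have "(\<lambda>i. norm (a i - b i) / norm (a i) * norm (a i)) \<longlonglongrightarrow> 0"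
    using tendsto_mult[OF assms(1)[unfolded rel_close_def] tendsto_norm_zero[OF assms(3)]] by simp
  moreover have "eventually (\<lambda>i. norm (a i - b i) / norm (a i) * norm (a i) = norm (a i - b i)) sequentially"
    using assms(2) by eventually_elim simp
  ultimately have "(\<lambda>i. norm (a i - b i)) \<longlonglongrightarrow> 0"
    by (rule Lim_transform_eventually)
  then have "(\<lambda>i. a i - b i) \<longlonglongrightarrow> 0"
    by (rule tendsto_norm_zero_cancel)
  from tendsto_diff[OF assms(3) this] show ?thesis by simp
qed

lemma rel_close_sgn_tendsto:
  assumes "rel_close a b" and "eventually (\<lambda>i. a i \<noteq> 0) sequentially"
    and "(\<lambda>i. sgn (a i)) \<longlonglongrightarrow> d"
  shows "(\<lambda>i. sgn (b i)) \<longlonglongrightarrow> d"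
proof -
  have "(\<lambda>i. sgn (b i) - sgn (a i)) \<longlonglongrightarrow> 0"
  proof (rule Lim_null_comparison)
    show "eventually (\<lambda>i. norm (sgn (b i) - sgn (a i)) \<le> 2 * (norm (a i - b i) / norm (a i))) sequentially"
      using assms(2) by eventually_elim (use norm_sgn_diff_le in \<open>auto simp: norm_minus_commute\<close>)
    show "(\<lambda>i. 2 * (norm (a i - b i) / norm (a i))) \<longlonglongrightarrow> 0"
      using tendsto_mult_right_zero assms(1) unfolding rel_close_def by blast
  qed
  from tendsto_add[OF this assms(3)] show ?thesis by simp
qed

lemma tangent_dirs_mono: "A \<subseteq> B \<Longrightarrow> tangent_dirs A \<subseteq> tangent_dirs B"
  unfolding tangent_dirs_def by blast

lemma tangent_dirsI:
  assumes "eventually (\<lambda>i. x i \<in> A \<and> x i \<noteq> 0) sequentially"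
    and "x \<longlonglongrightarrow> 0" and "(\<lambda>i. sgn (x i)) \<longlonglongrightarrow> d"
  shows "d \<in> tangent_dirs A"
proof -
  obtain N where N: "\<And>i. i \<ge> N \<Longrightarrow> x i \<in> A \<and> x i \<noteq> 0"
    using assms(1) unfolding eventually_sequentially by blast
  define x' where "x' i = x (i + N)" for i
  have x'A: "x' i \<in> A - {0}" for i using N unfolding x'_def by auto
  have x'0: "x' \<longlonglongrightarrow> 0" and x'd: "(\<lambda>i. sgn (x' i)) \<longlonglongrightarrow> d"
    unfolding x'_def using LIMSEQ_ignore_initial_segment assms(2,3) by auto
  have "(\<lambda>i. norm (sgn (x' i))) \<longlonglongrightarrow> norm d" using tendsto_norm[OF x'd] .
  moreover have "norm (sgn (x' i)) = 1" for i using x'A by (simp add: norm_sgn)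
  ultimately have "norm d = 1" by (simp add: LIMSEQ_const_iff)
  with x'A x'0 x'd show ?thesis unfolding tangent_dirs_def by (auto simp: sgn_div_norm)
qed

lemma tangent_dirs_rel_closeI:
  assumes "rel_close a b" and "eventually (\<lambda>i. a i \<noteq> 0) sequentially" and "a \<longlonglongrightarrow> 0"
    and "(\<lambda>i. sgn (a i)) \<longlonglongrightarrow> d" and "eventually (\<lambda>i. b i \<in> A) sequentially"
  shows "d \<in> tangent_dirs A"
proof (rule tangent_dirsI)
  show "eventually (\<lambda>i. b i \<in> A \<and> b i \<noteq> 0) sequentially"
    using eventually_conj[OF assms(5) rel_close_eventually_nonzero[OF assms(1,2)]] .
  show "b \<longlonglongrightarrow> 0" using rel_close_tendsto_zero[OF assms(1-3)] .
  show "(\<lambda>i. sgn (b i)) \<longlonglongrightarrow> d" using rel_close_sgn_tendsto[OF assms(1,2,4)] .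
qed

locale bilipschitz_fixing_0 =
  fixes h :: "'a::real_normed_vector \<Rightarrow> 'b::real_normed_vector" and S :: "'a set" and K1 K2 :: real
  assumes K1_pos: "0 < K1" and zero_in_S: "0 \<in> S" and h_zero: "h 0 = 0"
    and lower_bound: "\<And>x y. x \<in> S \<Longrightarrow> y \<in> S \<Longrightarrow> K1 * norm (x - y) \<le> norm (h x - h y)"
    and upper_bound: "\<And>x y. x \<in> S \<Longrightarrow> y \<in> S \<Longrightarrow> norm (h x - h y) \<le> K2 * norm (x - y)"
begin

lemma norm_lower_bound: "x \<in> S \<Longrightarrow> K1 * norm x \<le> norm (h x)"
  using lower_bound[OF _ zero_in_S] h_zero by fastforce

lemma norm_upper_bound: "x \<in> S \<Longrightarrow> norm (h x) \<le> K2 * norm x"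
  using upper_bound[OF _ zero_in_S] h_zero by fastforce

lemma image_eq_0_iff: "x \<in> S \<Longrightarrow> h x = 0 \<longleftrightarrow> x = 0"
  using norm_lower_bound[of x] K1_pos h_zero by (auto simp: mult_le_0_iff)

lemma rel_dist_le:
  assumes "x \<in> S" "y \<in> S"
  shows "norm (x - y) / norm x \<le> K2 / K1 * (norm (h x - h y) / norm (h x))"
proof (cases "x = 0")
  case False
  have hx: "norm (h x) > 0" using False assms(1) image_eq_0_iff by simp
  have K2: "0 < K2"
    using norm_upper_bound[OF assms(1)] hx False by (smt (verit) mult_nonpos_nonneg norm_ge_zero)
  have "norm (h x) / K2 \<le> norm x"
    using norm_upper_bound[OF assms(1)] K2 by (simp add: pos_divide_le_eq mult.commute)
  have "norm (x - y) / norm x \<le> norm (h x - h y) / K1 / norm x"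
    using lower_bound[OF assms] K1_pos False by (simp add: field_simps)
  also have "\<dots> \<le> norm (h x - h y) / K1 / (norm (h x) / K2)"
    using \<open>norm (h x) / K2 \<le> norm x\<close> hx K1_pos K2 False by (intro divide_left_mono) auto
  also have "\<dots> = K2 / K1 * (norm (h x - h y) / norm (h x))" by simp
  finally show ?thesis .
qed (simp add: h_zero)

lemma image_rel_dist_le:
  assumes "x \<in> S" "y \<in> S"
  shows "norm (h x - h y) / norm (h x) \<le> K2 / K1 * (norm (x - y) / norm x)"
proof (cases "x = 0")
  case False
  have "norm (h x - h y) / norm (h x) \<le> K2 * norm (x - y) / norm (h x)"
    using upper_bound[OF assms] by (simp add: divide_right_mono)
  also have "\<dots> \<le> K2 * norm (x - y) / (K1 * norm x)"
  proof (rule divide_left_mono)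
    show "0 \<le> K2 * norm (x - y)" using upper_bound[OF assms] norm_ge_zero[of "h x - h y"] by linarith
    show "0 < norm (h x) * (K1 * norm x)"
    proof -
      have "0 < K1 * norm x" using K1_pos False by simp
      moreover have "0 < norm (h x)" using calculation norm_lower_bound[OF assms(1)] by linarith
      ultimately show ?thesis by simp
    qed
  qed (use norm_lower_bound[OF assms(1)] in simp)
  also have "\<dots> = K2 / K1 * (norm (x - y) / norm x)" by simp
  finally show ?thesis .
qed (simp add: h_zero)

lemma rel_close_of_image:
  assumes "rel_close (\<lambda>i. h (x i)) (\<lambda>i. h (y i))"
    and "eventually (\<lambda>i. x i \<in> S \<and> y i \<in> S) sequentially"
  shows "rel_close x y"
  unfolding rel_close_def
proof (rule Lim_null_comparison)
  show "eventually (\<lambda>i. norm (norm (x i - y i) / norm (x i))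
          \<le> K2 / K1 * (norm (h (x i) - h (y i)) / norm (h (x i)))) sequentially"
    using assms(2) by eventually_elim (simp only: real_norm_def abs_divide abs_norm_cancel rel_dist_le)
  show "(\<lambda>i. K2 / K1 * (norm (h (x i) - h (y i)) / norm (h (x i)))) \<longlonglongrightarrow> 0"
    using assms(1) unfolding rel_close_def by (rule tendsto_mult_right_zero)
qed

lemma rel_close_image:
  assumes "rel_close x y"
    and "eventually (\<lambda>i. x i \<in> S \<and> y i \<in> S) sequentially"
  shows "rel_close (\<lambda>i. h (x i)) (\<lambda>i. h (y i))"
  unfolding rel_close_def
proof (rule Lim_null_comparison)
  show "eventually (\<lambda>i. norm (norm (h (x i) - h (y i)) / norm (h (x i)))
          \<le> K2 / K1 * (norm (x i - y i) / norm (x i))) sequentially"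
    using assms(2) by eventually_elim (simp only: real_norm_def abs_divide abs_norm_cancel image_rel_dist_le)
  show "(\<lambda>i. K2 / K1 * (norm (x i - y i) / norm (x i))) \<longlonglongrightarrow> 0"
    using assms(1) unfolding rel_close_def by (rule tendsto_mult_right_zero)
qed

lemma tendsto_zero_of_image:
  assumes "\<And>i. x i \<in> S" and "(\<lambda>i. h (x i)) \<longlonglongrightarrow> 0"
  shows "x \<longlonglongrightarrow> 0"
proof (rule Lim_null_comparison)
  show "eventually (\<lambda>i. norm (x i) \<le> norm (h (x i)) / K1) sequentially"
    using norm_lower_bound[OF assms(1)] K1_pos by (simp add: field_simps)
  show "(\<lambda>i. norm (h (x i)) / K1) \<longlonglongrightarrow> 0"
    using tendsto_divide_zero[OF tendsto_norm_zero[OF assms(2)]] .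
qed

end

lemma image_seq_preimage:
  assumes "\<And>i. y i \<in> h ` A"
  obtains x where "\<And>i. x i \<in> A" "\<And>i. h (x i) = y i"
proof -
  have "\<forall>i. \<exists>x. x \<in> A \<and> h x = y i" using assms by (metis imageE)
  then obtain x where "\<forall>i. x i \<in> A \<and> h (x i) = y i" by (rule choice[THEN exE])
  then show ?thesis using that by blast
qed

lemma SSP_obtains_rel_close:
  assumes "SSP A" and "a \<longlonglongrightarrow> 0" and "(\<lambda>i. sgn (a i)) \<longlonglongrightarrow> d" and "d \<in> tangent_dirs A"
  obtains b where "\<And>i. b i \<in> A" and "rel_close a b"
  using assms unfolding SSP_def rel_close_def sgn_div_norm by blast

lemma tangent_dirs_bilipschitz_image_SSP:
  fixes h :: "'a::euclidean_space \<Rightarrow> 'b::euclidean_space"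
  assumes "bilipschitz_fixing_0 h S K1 K2" and "0 \<in> interior S" and "SSP A"
    and "\<And>i. x i \<in> S" "\<And>i. x i \<noteq> 0" and "x \<longlonglongrightarrow> 0"
    and "(\<lambda>i. sgn (x i)) \<longlonglongrightarrow> e" and "e \<in> tangent_dirs A"
    and "(\<lambda>i. sgn (h (x i))) \<longlonglongrightarrow> d"
  shows "d \<in> tangent_dirs (h ` (A \<inter> S))"
proof -
  interpret bilipschitz_fixing_0 h S K1 K2 by fact
  obtain w where w: "\<And>i. w i \<in> A" and xw: "rel_close x w"
    using SSP_obtains_rel_close[OF assms(3,6-8)] by blast
  have "w \<longlonglongrightarrow> 0" using rel_close_tendsto_zero[OF xw _ assms(6)] assms(5) by simp
  then have w_S: "eventually (\<lambda>i. w i \<in> S) sequentially"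
    using topological_tendstoD[OF _ open_interior assms(2)] interior_subset
    by (blast intro: eventually_mono)
  have "rel_close (\<lambda>i. h (x i)) (\<lambda>i. h (w i))"
    using rel_close_image[OF xw] w_S assms(4) by (auto elim: eventually_mono)
  then show ?thesis
  proof (rule tangent_dirs_rel_closeI)
    show "eventually (\<lambda>i. h (x i) \<noteq> 0) sequentially"
      using assms(4,5) image_eq_0_iff by simp
    show "(\<lambda>i. h (x i)) \<longlonglongrightarrow> 0"
    proof (rule Lim_null_comparison)
      show "eventually (\<lambda>i. norm (h (x i)) \<le> K2 * norm (x i)) sequentially"
        using norm_upper_bound[OF assms(4)] by simp
      show "(\<lambda>i. K2 * norm (x i)) \<longlonglongrightarrow> 0"
        using tendsto_mult_right_zero[OF tendsto_norm_zero[OF assms(6)]] .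
    qed
    show "eventually (\<lambda>i. h (w i) \<in> h ` (A \<inter> S)) sequentially"
      using w_S w by (auto elim: eventually_mono)
  qed (fact assms(9))
qed

lemma tangent_dirs_bilipschitz_image_Int:
  fixes h :: "'a::euclidean_space \<Rightarrow> 'b::euclidean_space"
  assumes "bilipschitz_fixing_0 h S K1 K2" and "0 \<in> interior S"
    and UV: "tangent_dirs (U \<inter> V) = tangent_dirs U \<inter> tangent_dirs V"
    and "SSP (U \<inter> V)" and "SSP (h ` (U \<inter> S))"
  shows "tangent_dirs (h ` (U \<inter> S)) \<inter> tangent_dirs (h ` (V \<inter> S)) \<subseteq> tangent_dirs (h ` (U \<inter> V \<inter> S))"
proof
  interpret bilipschitz_fixing_0 h S K1 K2 by fact
  fix d assume d: "d \<in> tangent_dirs (h ` (U \<inter> S)) \<inter> tangent_dirs (h ` (V \<inter> S))"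
  then obtain y where y: "\<And>i. y i \<in> h ` (V \<inter> S)" "\<And>i. y i \<noteq> 0"
      "y \<longlonglongrightarrow> 0" "(\<lambda>i. sgn (y i)) \<longlonglongrightarrow> d"
    unfolding tangent_dirs_def by (auto simp: sgn_div_norm)
  obtain v where v: "\<And>i. v i \<in> V \<inter> S" and hv: "\<And>i. h (v i) = y i"
    using image_seq_preimage[of y h "V \<inter> S"] y(1) by blast
  have v_nz: "v i \<noteq> 0" for i using y(2)[of i] hv[of i] h_zero by auto
  have v_0: "v \<longlonglongrightarrow> 0" using v y(3) by (intro tendsto_zero_of_image) (auto simp: hv)
  obtain b where b: "\<And>i. b i \<in> h ` (U \<inter> S)" and yb: "rel_close y b"
    using SSP_obtains_rel_close[OF assms(5) y(3,4)] d by blast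
  obtain u where u: "\<And>i. u i \<in> U \<inter> S" and hu: "\<And>i. h (u i) = b i"
    using image_seq_preimage[of b h "U \<inter> S"] b by blast
  have vu: "rel_close v u"
    using yb v u by (intro rel_close_of_image) (auto simp: hv hu)
  obtain e s where s: "strict_mono s" and v_e: "(\<lambda>i. sgn (v (s i))) \<longlonglongrightarrow> e"
    using seq_compactE[OF compact_imp_seq_compact[OF compact_sphere], of "\<lambda>i. sgn (v i)" 0 1]
    by (auto simp: v_nz norm_sgn comp_def) blast
  have vs_0: "(\<lambda>i. v (s i)) \<longlonglongrightarrow> 0" using LIMSEQ_subseq_LIMSEQ[OF v_0 s] by (simp add: comp_def)
  have "e \<in> tangent_dirs V"
    using v v_nz by (intro tangent_dirsI[OF _ vs_0 v_e]) auto
  moreover have "e \<in> tangent_dirs U"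
    using rel_close_subseq[OF vu s] v_nz u
    by (intro tangent_dirs_rel_closeI[OF _ _ vs_0 v_e]) (auto simp: comp_def)
  ultimately have "e \<in> tangent_dirs (U \<inter> V)" using UV by blast
  moreover have "(\<lambda>i. sgn (h (v (s i)))) \<longlonglongrightarrow> d"
    using LIMSEQ_subseq_LIMSEQ[OF y(4) s] by (simp add: hv comp_def)
  ultimately show "d \<in> tangent_dirs (h ` (U \<inter> V \<inter> S))"
    using v v_nz by (intro tangent_dirs_bilipschitz_image_SSP[OF assms(1,2,4) _ _ vs_0 v_e]) auto
qed

lemma bilipschitz_homeo_germ_fixing_0:
  assumes "bilipschitz_homeo_germ h r"
  obtains K1 K2 where "bilipschitz_fixing_0 h (ball 0 r) K1 K2"
proof -
  from assms obtain K1 K2 where "0 < K1" "\<forall>x\<in>ball 0 r. \<forall>y\<in>ball 0 r.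
        K1 * norm (x - y) \<le> norm (h x - h y) \<and> norm (h x - h y) \<le> K2 * norm (x - y)"
    "r > 0" "h 0 = 0"
    unfolding bilipschitz_homeo_germ_def by blast
  then have "bilipschitz_fixing_0 h (ball 0 r) K1 K2"
    by unfold_locales auto
  then show ?thesis by (rule that)
qed

theorem theorem2p30:
  fixes h :: "'a::euclidean_space \<Rightarrow> 'a" and r :: real and U V :: "'a set"
  assumes "bilipschitz_homeo_germ h r"
    and "0 \<in> closure U \<inter> closure V"
    and "tangent_dirs (U \<inter> V) = tangent_dirs U \<inter> tangent_dirs V"
    and "SSP (U \<inter> V)"
    and "SSP (h ` (U \<inter> ball 0 r))"
  shows "tangent_dirs (h ` (U \<inter> V \<inter> ball 0 r)) =
         tangent_dirs (h ` (U \<inter> ball 0 r)) \<inter> tangent_dirs (h ` (V \<inter> ball 0 r))"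
proof
  obtain K1 K2 where "bilipschitz_fixing_0 h (ball 0 r) K1 K2"
    using bilipschitz_homeo_germ_fixing_0[OF assms(1)] .
  moreover have "0 \<in> interior (ball 0 r)"
    using assms(1) by (simp add: bilipschitz_homeo_germ_def)
  ultimately show "tangent_dirs (h ` (U \<inter> ball 0 r)) \<inter> tangent_dirs (h ` (V \<inter> ball 0 r))
      \<subseteq> tangent_dirs (h ` (U \<inter> V \<inter> ball 0 r))"
    using assms(3-5) by (rule tangent_dirs_bilipschitz_image_Int)
qed (intro Int_greatest tangent_dirs_mono image_mono; blast)
end
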